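(* Let $f=\frac1n\sum_{i=1}^n f_i$, where each $f_i:\mathbb{R}^d\to\mathbb{R}$ is differentiable, bounded from below with infimum $f_i^{\mathrm{inf}}$, and $L_i$-smooth ($f_i(y)\le f_i(x)+\langle\nabla f_i(x),y-x\rangle+\frac{L_i}{2}\|y-x\|^2$ for all $x,y$); let $f^{\mathrm{inf}}=\inf f$. For each $i$ and $x$, let $g_i(x)$ be a random vector with $\mathbb{E}[g_i(x)]=\nabla f_i(x)$ satisfying, for some constants $A_i,B_i,C_i\ge0$ and all $x$, $$\mathbb{E}\|g_i(x)\|^2\le 2A_i(f_i(x)-f_i^{\mathrm{inf}})+B_i\|\nabla f_i(x)\|^2+C_i.$$ Let $\mathcal{Q}_1,\dots,\mathcal{Q}_n$ be mutually independent random operators, independent of $(g_1(x),\dots,g_n(x))$, with each $\mathcal{Q}_i$ an $\omega_i$-compression operator, and set $g(x)=\frac1n\sum_{i=1}^n\mathcal{Q}_i(g_i(x))$. Then there exist constants $A,B,C\ge 0$ such that for all $x$, $$\mathbb{E}\|g(x)\|^2\le 2A(f(x)-f^{\mathrm{inf}})+B\|\nabla f(x)\|^2+C.$$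
   Context: A random operator $\mathcal{Q}:\mathbb{R}^d\to\mathbb{R}^d$ is an $\omega$-compression operator ($\omega\ge0$) if for every $x\in\mathbb{R}^d$, $\mathbb{E}[\mathcal{Q}(x)]=x$ and $\mathbb{E}\|\mathcal{Q}(x)-x\|^2\le\omega\|x\|^2$. *)

theory Defs
  imports "HOL-Probability.Probability"
begin

text \<open>An omega-compression operator, given as a random operator
  Q :: 'w \<Rightarrow> 'a \<Rightarrow> 'a on the probability space M
  (Q s is the realised operator at sample point s):
  unbiased and with relative variance bounded by omega.\<close>
definition compression_operator ::
    "'w measure \<Rightarrow> ('w \<Rightarrow> 'a::euclidean_space \<Rightarrow> 'a) \<Rightarrow> real \<Rightarrow> bool" where
  "compression_operator M Q \<omega> \<longleftrightarrow>
     \<omega> \<ge> 0 \<and>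
     (\<forall>y. integrable M (\<lambda>s. Q s y) \<and> (\<integral>s. Q s y \<partial>M) = y \<and>
          (\<integral>\<^sup>+s. ennreal ((norm (Q s y - y))\<^sup>2) \<partial>M) \<le> ennreal (\<omega> * (norm y)\<^sup>2))"

end

theory Submission
  imports Defs
begin

(* For each node i, since Q_i is independent of g_i(x) and unbiased,
   E||Q_i(g_i(x))||^2 = E||g_i(x)||^2 + E||Q_i(g_i(x)) - g_i(x)||^2 <= (1 + omega_i) E||g_i(x)||^2.
   Smoothness and boundedness below give ||grad f_i(x)||^2 <= 2 L_i (f_i(x) - f_i^inf), so the
   ABC bound of node i turns into (1 + omega_i) ((2 A_i + 2 B_i L_i) (f_i(x) - f_i^inf) + C_i).
   Jensen's inequality ||mean v_i||^2 <= mean ||v_i||^2 averages these bounds, and as the mean of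
   the f_i^inf is at most f^inf, the averaged gaps are f(x) - f^inf up to an additive constant.
   So the claim holds even with B = 0. *)

lemma norm_mean_sq_le:
  fixes v :: "'i \<Rightarrow> 'a::real_normed_vector"
  shows "(norm ((1 / real (card I)) *\<^sub>R (\<Sum>i\<in>I. v i)))\<^sup>2 \<le> (1 / real (card I)) * (\<Sum>i\<in>I. (norm (v i))\<^sup>2)"
proof (cases "card I = 0")
  case False
  have "(norm (\<Sum>i\<in>I. v i))\<^sup>2 \<le> (\<Sum>i\<in>I. norm (v i))\<^sup>2"
    by (intro power_mono norm_sum) auto
  also have "\<dots> \<le> (\<Sum>i\<in>I. (norm (v i))\<^sup>2) * real (card I)"
    by (rule sum_squared_le_sum_of_squares)
  finally show ?thesis
    using False by (simp add: power_divide divide_simps power2_eq_square)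
qed simp

lemma (in prob_space) nn_integral_norm_mean_sq_le:
  fixes X :: "'i \<Rightarrow> 'a \<Rightarrow> 'b::euclidean_space"
  assumes X: "\<And>i. i \<in> I \<Longrightarrow> X i \<in> borel_measurable M"
    and b: "\<And>i. i \<in> I \<Longrightarrow> 0 \<le> b i \<and> (\<integral>\<^sup>+w. ennreal ((norm (X i w))\<^sup>2) \<partial>M) \<le> ennreal (b i)"
  shows "(\<integral>\<^sup>+w. ennreal ((norm ((1 / real (card I)) *\<^sub>R (\<Sum>i\<in>I. X i w)))\<^sup>2) \<partial>M)
    \<le> ennreal ((1 / real (card I)) * (\<Sum>i\<in>I. b i))"
proof -
  have "(\<integral>\<^sup>+w. ennreal ((norm ((1 / real (card I)) *\<^sub>R (\<Sum>i\<in>I. X i w)))\<^sup>2) \<partial>M)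
      \<le> (\<integral>\<^sup>+w. ennreal (1 / real (card I)) * (\<Sum>i\<in>I. ennreal ((norm (X i w))\<^sup>2)) \<partial>M)"
  proof (rule nn_integral_mono)
    fix w
    have "ennreal ((norm ((1 / real (card I)) *\<^sub>R (\<Sum>i\<in>I. X i w)))\<^sup>2)
        \<le> ennreal ((1 / real (card I)) * (\<Sum>i\<in>I. (norm (X i w))\<^sup>2))"
      by (intro ennreal_leI norm_mean_sq_le)
    also have "\<dots> = ennreal (1 / real (card I)) * ennreal (\<Sum>i\<in>I. (norm (X i w))\<^sup>2)"
      by (rule ennreal_mult) (auto intro: sum_nonneg)
    also have "\<dots> = ennreal (1 / real (card I)) * (\<Sum>i\<in>I. ennreal ((norm (X i w))\<^sup>2))"
      by (simp add: sum_ennreal)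
    finally show "ennreal ((norm ((1 / real (card I)) *\<^sub>R (\<Sum>i\<in>I. X i w)))\<^sup>2)
        \<le> ennreal (1 / real (card I)) * (\<Sum>i\<in>I. ennreal ((norm (X i w))\<^sup>2))" .
  qed
  also have "\<dots> = ennreal (1 / real (card I)) * (\<Sum>i\<in>I. \<integral>\<^sup>+w. ennreal ((norm (X i w))\<^sup>2) \<partial>M)"
  proof -
    have "(\<lambda>w. ennreal ((norm (X i w))\<^sup>2)) \<in> borel_measurable M" if "i \<in> I" for i
      using X[OF that] by simp
    then show ?thesis
      by (simp only: nn_integral_cmult[OF borel_measurable_sum] nn_integral_sum)
  qed
  also have "\<dots> \<le> ennreal (1 / real (card I)) * (\<Sum>i\<in>I. ennreal (b i))"
    using b by (intro mult_left_mono sum_mono) auto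
  also have "\<dots> = ennreal ((1 / real (card I)) * (\<Sum>i\<in>I. b i))"
    using b by (simp add: sum_ennreal sum_nonneg flip: ennreal_mult)
  finally show ?thesis .
qed

lemma gradient_norm_sq_le_of_smooth:
  fixes f :: "'a::real_inner \<Rightarrow> real"
  assumes bdd: "bdd_below (range f)" and K: "0 < K" "L \<le> K"
    and smooth: "\<And>y. f y \<le> f x + g \<bullet> (y - x) + L / 2 * (norm (y - x))\<^sup>2"
  shows "(norm g)\<^sup>2 \<le> 2 * K * (f x - Inf (range f))"
proof -
  define y where "y = x - (1 / K) *\<^sub>R g"
  have "Inf (range f) \<le> f y"
    using bdd by (simp add: cInf_lower)
  also have "\<dots> \<le> f x + g \<bullet> (y - x) + L / 2 * (norm (y - x))\<^sup>2"
    by (rule smooth)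
  also have "\<dots> \<le> f x + g \<bullet> (y - x) + K / 2 * (norm (y - x))\<^sup>2"
    using K by (intro add_left_mono mult_right_mono) auto
  also have "g \<bullet> (y - x) = - (norm g)\<^sup>2 / K"
    by (simp add: y_def power2_norm_eq_inner)
  also have "(norm (y - x))\<^sup>2 = (norm g)\<^sup>2 / K\<^sup>2"
    using K by (simp add: y_def power_divide)
  also have "f x + - (norm g)\<^sup>2 / K + K / 2 * ((norm g)\<^sup>2 / K\<^sup>2) = f x - (norm g)\<^sup>2 / (2 * K)"
    using K by (simp add: field_simps power2_eq_square)
  finally show ?thesis
    using K by (simp add: field_simps)
qed

lemma mean_Inf_le_Inf_mean:
  fixes f :: "'i \<Rightarrow> 'a \<Rightarrow> real"
  assumes "\<And>i. i \<in> I \<Longrightarrow> bdd_below (range (f i))"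
  shows "(1 / real (card I)) * (\<Sum>i\<in>I. Inf (range (f i)))
    \<le> Inf (range (\<lambda>x. (1 / real (card I)) * (\<Sum>i\<in>I. f i x)))"
  using assms by (intro cInf_greatest) (auto intro!: divide_right_mono sum_mono cInf_lower)

lemma mean_weighted_gap_le:
  fixes f :: "'i \<Rightarrow> 'a \<Rightarrow> real"
  assumes "\<And>i. i \<in> I \<Longrightarrow> bdd_below (range (f i))" and "\<And>i. i \<in> I \<Longrightarrow> 0 \<le> a i \<and> a i \<le> K"
  shows "(1 / real (card I)) * (\<Sum>i\<in>I. a i * (f i x - Inf (range (f i))))
    \<le> K * ((1 / real (card I)) * (\<Sum>i\<in>I. f i x) - (1 / real (card I)) * (\<Sum>i\<in>I. Inf (range (f i))))"
proof -
  have "(\<Sum>i\<in>I. a i * (f i x - Inf (range (f i)))) \<le> (\<Sum>i\<in>I. K * (f i x - Inf (range (f i))))"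
    using assms by (intro sum_mono mult_right_mono) (auto simp: cInf_lower)
  also have "\<dots> = K * ((\<Sum>i\<in>I. f i x) - (\<Sum>i\<in>I. Inf (range (f i))))"
    by (simp add: sum_subtractf flip: sum_distrib_left)
  finally show ?thesis
    by (simp add: divide_right_mono flip: right_diff_distrib diff_divide_distrib)
qed

lemma mean_weighted_gaps_le_gap_of_mean:
  fixes f :: "'i \<Rightarrow> 'a \<Rightarrow> real"
  assumes I: "finite I" and bdd: "\<And>i. i \<in> I \<Longrightarrow> bdd_below (range (f i))"
    and a: "\<And>i. i \<in> I \<Longrightarrow> 0 \<le> a i" and c: "\<And>i. i \<in> I \<Longrightarrow> 0 \<le> c i"
  defines "F \<equiv> \<lambda>x. (1 / real (card I)) * (\<Sum>i\<in>I. f i x)"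
  obtains K D where "0 \<le> K" "0 \<le> D"
    "\<And>x. (1 / real (card I)) * (\<Sum>i\<in>I. a i * (f i x - Inf (range (f i))) + c i)
      \<le> K * (F x - Inf (range F)) + D"
proof
  define m where "m = (1 / real (card I)) * (\<Sum>i\<in>I. Inf (range (f i)))"
  have m_le: "m \<le> Inf (range F)"
    unfolding m_def F_def using bdd by (rule mean_Inf_le_Inf_mean)
  show K: "0 \<le> (\<Sum>i\<in>I. a i)"
    using a by (rule sum_nonneg)
  show "0 \<le> (\<Sum>i\<in>I. a i) * (Inf (range F) - m) + (1 / real (card I)) * (\<Sum>i\<in>I. c i)"
    using a m_le c by (intro add_nonneg_nonneg mult_nonneg_nonneg sum_nonneg) auto
  fix x
  have "(1 / real (card I)) * (\<Sum>i\<in>I. a i * (f i x - Inf (range (f i))))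
      \<le> (\<Sum>i\<in>I. a i) * (F x - m)"
    unfolding F_def m_def using bdd a I by (intro mean_weighted_gap_le) (auto intro: member_le_sum)
  then show "(1 / real (card I)) * (\<Sum>i\<in>I. a i * (f i x - Inf (range (f i))) + c i)
      \<le> (\<Sum>i\<in>I. a i) * (F x - Inf (range F))
        + ((\<Sum>i\<in>I. a i) * (Inf (range F) - m) + (1 / real (card I)) * (\<Sum>i\<in>I. c i))"
    unfolding sum.distrib distrib_left by (simp add: right_diff_distrib)
qed

lemma component_vimage_in_restrict_vimages:
  assumes i: "i \<in> I" and Z: "\<And>j. j \<in> I \<Longrightarrow> Z j \<in> measurable M (N j)" and A: "A \<in> sets (N i)"
  shows "Z i -` A \<inter> space M \<in> {(\<lambda>w. \<lambda>j\<in>I. Z j w) -` E \<inter> space M | E. E \<in> sets (Pi\<^sub>M I N)}"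
proof (intro CollectI exI conjI)
  show "(\<lambda>x. x i) -` A \<inter> space (Pi\<^sub>M I N) \<in> sets (Pi\<^sub>M I N)"
    using i A by (intro measurable_sets[OF measurable_component_singleton])
  show "Z i -` A \<inter> space M = (\<lambda>w. \<lambda>j\<in>I. Z j w) -` ((\<lambda>x. x i) -` A \<inter> space (Pi\<^sub>M I N)) \<inter> space M"
    using i measurable_space[OF Z] by (auto simp: space_PiM)
qed

lemma (in prob_space) indep_set_mono:
  assumes indep: "indep_set A B" and "A' \<subseteq> A" "B' \<subseteq> B"
  shows "indep_set A' B'"
  using indep unfolding indep_set_def
  by (rule indep_sets_mono_sets) (use assms(2,3) in \<open>auto split: bool.split\<close>)

lemma (in prob_space) indep_set_vimages_component:
  fixes X :: "'i \<Rightarrow> 'a \<Rightarrow> 'x" and Y :: "'i \<Rightarrow> 'a \<Rightarrow> 'y"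
  assumes i: "i \<in> I"
    and X: "\<And>j. j \<in> I \<Longrightarrow> random_variable (S j) (X j)"
    and Y: "\<And>j. j \<in> I \<Longrightarrow> random_variable (T j) (Y j)"
    and indep: "indep_set
        {(\<lambda>w. \<lambda>j\<in>I. X j w) -` E \<inter> space M | E. E \<in> sets (Pi\<^sub>M I S)}
        {(\<lambda>w. \<lambda>j\<in>I. Y j w) -` E \<inter> space M | E. E \<in> sets (Pi\<^sub>M I T)}"
  shows "indep_set {X i -` A \<inter> space M | A. A \<in> sets (S i)} {Y i -` B \<inter> space M | B. B \<in> sets (T i)}"
  using indep
proof (rule indep_set_mono)
  show "{X i -` A \<inter> space M | A. A \<in> sets (S i)}
      \<subseteq> {(\<lambda>w. \<lambda>j\<in>I. X j w) -` E \<inter> space M | E. E \<in> sets (Pi\<^sub>M I S)}"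
    using component_vimage_in_restrict_vimages[of i I X M S, OF i X] by auto
  show "{Y i -` B \<inter> space M | B. B \<in> sets (T i)}
      \<subseteq> {(\<lambda>w. \<lambda>j\<in>I. Y j w) -` E \<inter> space M | E. E \<in> sets (Pi\<^sub>M I T)}"
    using component_vimage_in_restrict_vimages[of i I Y M T, OF i Y] by auto
qed

(* The library's indep_var needs both variables to take values in the same type, so independence
   of variables with different codomains is stated via their preimage sigma-algebras. *)
lemma (in prob_space) distr_pair_eq_pair_distr_of_indep_set:
  fixes X :: "'a \<Rightarrow> 'x" and Y :: "'a \<Rightarrow> 'y"
  assumes X: "random_variable S X" and Y: "random_variable T Y"
    and indep: "indep_set {X -` A \<inter> space M | A. A \<in> sets S} {Y -` B \<inter> space M | B. B \<in> sets T}"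
  shows "distr M (S \<Otimes>\<^sub>M T) (\<lambda>w. (X w, Y w)) = distr M S X \<Otimes>\<^sub>M distr M T Y"
proof (rule pair_measure_eqI[symmetric])
  interpret PX: prob_space "distr M S X" by (rule prob_space_distr[OF X])
  interpret PY: prob_space "distr M T Y" by (rule prob_space_distr[OF Y])
  show "sigma_finite_measure (distr M S X)" "sigma_finite_measure (distr M T Y)" ..
  show "sets (distr M S X \<Otimes>\<^sub>M distr M T Y) = sets (distr M (S \<Otimes>\<^sub>M T) (\<lambda>w. (X w, Y w)))"
    by (simp cong: sets_pair_measure_cong)
  fix A B assume "A \<in> sets (distr M S X)" "B \<in> sets (distr M T Y)"
  then have A: "A \<in> sets S" and B: "B \<in> sets T"
    by auto
  have "(\<lambda>w. (X w, Y w)) -` (A \<times> B) \<inter> space M = (X -` A \<inter> space M) \<inter> (Y -` B \<inter> space M)"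
    by auto
  moreover have "prob ((X -` A \<inter> space M) \<inter> (Y -` B \<inter> space M)) = prob (X -` A \<inter> space M) * prob (Y -` B \<inter> space M)"
    using A B by (intro indep_setD[OF indep]) auto
  ultimately show "emeasure (distr M S X) A * emeasure (distr M T Y) B
      = emeasure (distr M (S \<Otimes>\<^sub>M T) (\<lambda>w. (X w, Y w))) (A \<times> B)"
    using A B X Y by (simp add: emeasure_distr measurable_Pair emeasure_eq_measure ennreal_mult')
qed

lemma (in prob_space) nn_integral_indep_pair:
  fixes X :: "'a \<Rightarrow> 'x" and Y :: "'a \<Rightarrow> 'y"
  assumes X: "random_variable S X" and Y: "random_variable T Y"
    and indep: "indep_set {X -` A \<inter> space M | A. A \<in> sets S} {Y -` B \<inter> space M | B. B \<in> sets T}"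
    and h: "h \<in> borel_measurable (S \<Otimes>\<^sub>M T)"
  shows "(\<integral>\<^sup>+w. h (X w, Y w) \<partial>M) = (\<integral>\<^sup>+w. (\<integral>\<^sup>+w'. h (X w', Y w) \<partial>M) \<partial>M)"
proof -
  interpret PX: prob_space "distr M S X" by (rule prob_space_distr[OF X])
  interpret PY: prob_space "distr M T Y" by (rule prob_space_distr[OF Y])
  interpret pair_sigma_finite "distr M S X" "distr M T Y" ..
  have "(\<integral>\<^sup>+w. h (X w, Y w) \<partial>M) = (\<integral>\<^sup>+p. h p \<partial>(distr M S X \<Otimes>\<^sub>M distr M T Y))"
    using X Y h by (simp add: nn_integral_distr flip: distr_pair_eq_pair_distr_of_indep_set[OF X Y indep])
  also have "\<dots> = (\<integral>\<^sup>+y. (\<integral>\<^sup>+s. h (s, y) \<partial>distr M S X) \<partial>distr M T Y)"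
    using h by (intro nn_integral_snd[symmetric]) (simp cong: measurable_cong_sets)
  also have "\<dots> = (\<integral>\<^sup>+y. (\<integral>\<^sup>+w'. h (X w', y) \<partial>M) \<partial>distr M T Y)"
    using X h by (intro nn_integral_cong nn_integral_distr) (auto simp: space_pair_measure)
  also have "\<dots> = (\<integral>\<^sup>+w. (\<integral>\<^sup>+w'. h (X w', Y w) \<partial>M) \<partial>M)"
    using X Y h by (intro nn_integral_distr) auto
  finally show ?thesis .
qed

lemma compression_operator_nn_integral_norm_sq_le:
  assumes "prob_space M" and Q: "compression_operator M Q \<omega>"
  shows "(\<integral>\<^sup>+w. ennreal ((norm (Q w y))\<^sup>2) \<partial>M) \<le> ennreal ((1 + \<omega>) * (norm y)\<^sup>2)"
proof -
  interpret prob_space M by fact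
  have \<omega>: "0 \<le> \<omega>" and Qy: "integrable M (\<lambda>w. Q w y)" and mean: "(\<integral>w. Q w y \<partial>M) = y"
    and var: "(\<integral>\<^sup>+w. ennreal ((norm (Q w y - y))\<^sup>2) \<partial>M) \<le> ennreal (\<omega> * (norm y)\<^sup>2)"
    using Q unfolding compression_operator_def by auto
  have dev: "integrable M (\<lambda>w. (norm (Q w y - y))\<^sup>2)"
    using Qy le_less_trans[OF var ennreal_less_top] by (intro integrableI_bounded) auto
  have var_real: "(\<integral>w. (norm (Q w y - y))\<^sup>2 \<partial>M) \<le> \<omega> * (norm y)\<^sup>2"
    using var \<omega> by (simp add: nn_integral_eq_integral[OF dev])
  have pythagoras: "(norm (Q w y))\<^sup>2 = (norm (Q w y - y))\<^sup>2 + 2 * ((Q w y - y) \<bullet> y) + (norm y)\<^sup>2" for w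
    by (simp add: power2_norm_eq_inner algebra_simps inner_commute)
  have cross: "(\<integral>w. (Q w y - y) \<bullet> y \<partial>M) = 0"
    using Qy mean by (simp add: integral_inner_left prob_space)
  have "integrable M (\<lambda>w. (norm (Q w y))\<^sup>2)"
    using Qy dev unfolding pythagoras by auto
  then have "(\<integral>\<^sup>+w. ennreal ((norm (Q w y))\<^sup>2) \<partial>M) = ennreal (\<integral>w. (norm (Q w y))\<^sup>2 \<partial>M)"
    by (intro nn_integral_eq_integral) auto
  also have "(\<integral>w. (norm (Q w y))\<^sup>2 \<partial>M) = (\<integral>w. (norm (Q w y - y))\<^sup>2 \<partial>M) + (norm y)\<^sup>2"
    using Qy dev cross unfolding pythagoras by (simp add: prob_space)
  also have "\<dots> \<le> (1 + \<omega>) * (norm y)\<^sup>2"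
    using var_real by (simp add: algebra_simps)
  finally show ?thesis
    by (simp add: ennreal_leI)
qed

lemma (in prob_space) nn_integral_compressed_norm_sq_le:
  fixes Y :: "'a \<Rightarrow> 'b::euclidean_space"
  assumes \<xi>_rv: "random_variable S \<xi>" and Y_rv: "random_variable borel Y"
    and indep: "indep_set {\<xi> -` A \<inter> space M | A. A \<in> sets S} {Y -` B \<inter> space M | B. B \<in> sets borel}"
    and q: "(\<lambda>(s, y). q s y) \<in> borel_measurable (S \<Otimes>\<^sub>M borel)"
    and Q: "compression_operator M (\<lambda>w. q (\<xi> w)) \<omega>"
  shows "(\<integral>\<^sup>+w. ennreal ((norm (q (\<xi> w) (Y w)))\<^sup>2) \<partial>M)
    \<le> ennreal (1 + \<omega>) * (\<integral>\<^sup>+w. ennreal ((norm (Y w))\<^sup>2) \<partial>M)"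
proof -
  have \<omega>: "0 \<le> \<omega>"
    using Q by (simp add: compression_operator_def)
  have "(\<integral>\<^sup>+w. ennreal ((norm (q (\<xi> w) (Y w)))\<^sup>2) \<partial>M)
      = (\<integral>\<^sup>+w. (\<integral>\<^sup>+w'. ennreal ((norm (q (\<xi> w') (Y w)))\<^sup>2) \<partial>M) \<partial>M)"
    using nn_integral_indep_pair[OF \<xi>_rv Y_rv indep, of "\<lambda>(s, y). ennreal ((norm (q s y))\<^sup>2)"] q by simp
  also have "\<dots> \<le> (\<integral>\<^sup>+w. ennreal (1 + \<omega>) * ennreal ((norm (Y w))\<^sup>2) \<partial>M)"
    using compression_operator_nn_integral_norm_sq_le[OF prob_space_axioms Q] \<omega>
    by (intro nn_integral_mono) (simp add: ennreal_mult)
  also have "\<dots> = ennreal (1 + \<omega>) * (\<integral>\<^sup>+w. ennreal ((norm (Y w))\<^sup>2) \<partial>M)"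
    using Y_rv by (intro nn_integral_cmult) simp
  finally show ?thesis .
qed

lemma (in prob_space) nn_integral_compressed_gradient_sq_le:
  fixes f :: "'b::euclidean_space \<Rightarrow> real" and Y :: "'a \<Rightarrow> 'b"
  assumes \<xi>_rv: "random_variable S \<xi>" and Y_rv: "random_variable borel Y"
    and indep: "indep_set {\<xi> -` A \<inter> space M | A. A \<in> sets S} {Y -` B \<inter> space M | B. B \<in> sets borel}"
    and q: "(\<lambda>(s, y). q s y) \<in> borel_measurable (S \<Otimes>\<^sub>M borel)"
    and Q: "compression_operator M (\<lambda>w. q (\<xi> w)) \<omega>"
    and bdd: "bdd_below (range f)" and K: "0 < K" "L \<le> K"
    and smooth: "\<And>y. f y \<le> f x + g \<bullet> (y - x) + L / 2 * (norm (y - x))\<^sup>2"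
    and B: "0 \<le> B"
    and Y_moment: "(\<integral>\<^sup>+w. ennreal ((norm (Y w))\<^sup>2) \<partial>M)
      \<le> ennreal (2 * A * (f x - Inf (range f)) + B * (norm g)\<^sup>2 + C)"
  shows "(\<integral>\<^sup>+w. ennreal ((norm (q (\<xi> w) (Y w)))\<^sup>2) \<partial>M)
    \<le> ennreal ((1 + \<omega>) * ((2 * A + 2 * B * K) * (f x - Inf (range f)) + C))"
proof -
  have \<omega>: "0 \<le> \<omega>"
    using Q by (simp add: compression_operator_def)
  have "B * (norm g)\<^sup>2 \<le> B * (2 * K * (f x - Inf (range f)))"
    using gradient_norm_sq_le_of_smooth[OF bdd K smooth] B by (rule mult_left_mono)
  then have gap_bound: "(1 + \<omega>) * (2 * A * (f x - Inf (range f)) + B * (norm g)\<^sup>2 + C)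
      \<le> (1 + \<omega>) * ((2 * A + 2 * B * K) * (f x - Inf (range f)) + C)"
    using \<omega> by (intro mult_left_mono) (auto simp: algebra_simps)
  have "(\<integral>\<^sup>+w. ennreal ((norm (q (\<xi> w) (Y w)))\<^sup>2) \<partial>M)
      \<le> ennreal ((1 + \<omega>) * (2 * A * (f x - Inf (range f)) + B * (norm g)\<^sup>2 + C))"
    using order_trans[OF nn_integral_compressed_norm_sq_le[OF \<xi>_rv Y_rv indep q Q] mult_left_mono[OF Y_moment]] \<omega>
    by (simp add: ennreal_mult')
  then show ?thesis
    using ennreal_leI[OF gap_bound] by (rule order_trans)
qed

theorem proposition4:
  fixes M :: "'w measure"
    and n :: nat
    and f :: "nat \<Rightarrow> 'a::euclidean_space \<Rightarrow> real"
    and gradf :: "nat \<Rightarrow> 'a \<Rightarrow> 'a"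
    and gradF :: "'a \<Rightarrow> 'a"
    and L A B C \<omega> :: "nat \<Rightarrow> real"
    and G :: "nat \<Rightarrow> 'a \<Rightarrow> 'w \<Rightarrow> 'a"
    and S :: "nat \<Rightarrow> 's measure"
    and \<xi> :: "nat \<Rightarrow> 'w \<Rightarrow> 's"
    and q :: "nat \<Rightarrow> 's \<Rightarrow> 'a \<Rightarrow> 'a"
  defines "F \<equiv> (\<lambda>x. (1 / real n) * (\<Sum>i<n. f i x))"
  assumes P: "prob_space M"
    and n_pos: "n \<ge> 1"
    (* each f_i is differentiable with gradient gradf i *)
    and grad_fi: "\<And>i x. i < n \<Longrightarrow> (f i has_derivative (\<lambda>h. gradf i x \<bullet> h)) (at x)"
    (* the gradient of f *)
    and grad_F: "\<And>x. (F has_derivative (\<lambda>h. gradF x \<bullet> h)) (at x)"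
    (* bounded from below *)
    and bdd: "\<And>i. i < n \<Longrightarrow> bdd_below (range (f i))"
    (* L_i-smoothness *)
    and smooth: "\<And>i x y. i < n \<Longrightarrow>
        f i y \<le> f i x + gradf i x \<bullet> (y - x) + L i / 2 * (norm (y - x))\<^sup>2"
    (* stochastic gradients g_i(x) = G i x *)
    and G_meas: "\<And>i x. i < n \<Longrightarrow> G i x \<in> borel_measurable M"
    and G_unbiased: "\<And>i x. i < n \<Longrightarrow>
        integrable M (G i x) \<and> (\<integral>w. G i x w \<partial>M) = gradf i x"
    and ABC_nonneg: "\<And>i. i < n \<Longrightarrow> A i \<ge> 0 \<and> B i \<ge> 0 \<and> C i \<ge> 0"
    and G_second: "\<And>i x. i < n \<Longrightarrow>
        (\<integral>\<^sup>+w. ennreal ((norm (G i x w))\<^sup>2) \<partial>M)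
          \<le> ennreal (2 * A i * (f i x - Inf (range (f i))) + B i * (norm (gradf i x))\<^sup>2 + C i)"
    (* random operators Q_i(y) = q i (\<xi> i w) y, driven by random seeds \<xi> i *)
    and \<xi>_meas: "\<And>i. i < n \<Longrightarrow> \<xi> i \<in> measurable M (S i)"
    and q_meas: "\<And>i. i < n \<Longrightarrow> (\<lambda>(s, y). q i s y) \<in> borel_measurable (S i \<Otimes>\<^sub>M borel)"
    and compr: "\<And>i. i < n \<Longrightarrow> compression_operator M (\<lambda>w. q i (\<xi> i w)) (\<omega> i)"
    (* Q_1..Q_n mutually independent *)
    and indep_Q: "prob_space.indep_vars M S \<xi> {..<n}"
    (* (Q_1..Q_n) independent of (g_1(x),...,g_n(x)) *)
    and indep_QG: "\<And>x. prob_space.indep_set M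
        {(\<lambda>w. \<lambda>i\<in>{..<n}. \<xi> i w) -` E \<inter> space M | E. E \<in> sets (Pi\<^sub>M {..<n} S)}
        {(\<lambda>w. \<lambda>i\<in>{..<n}. G i x w) -` E \<inter> space M | E. E \<in> sets (Pi\<^sub>M {..<n} (\<lambda>_. borel))}"
  shows "\<exists>A' B' C' :: real. A' \<ge> 0 \<and> B' \<ge> 0 \<and> C' \<ge> 0 \<and>
     (\<forall>x. (\<integral>\<^sup>+w. ennreal ((norm ((1 / real n) *\<^sub>R (\<Sum>i<n. q i (\<xi> i w) (G i x w))))\<^sup>2) \<partial>M)
        \<le> ennreal (2 * A' * (F x - Inf (range F)) + B' * (norm (gradF x))\<^sup>2 + C'))"
proof -
  interpret prob_space M by (rule P)
  (* L i need not be positive, but the gradient bound needs a positive smoothness constant. *)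
  define a where "a i = (1 + \<omega> i) * (2 * A i + 2 * B i * max (L i) 1)" for i
  have \<omega>: "0 \<le> \<omega> i" if "i < n" for i
    using compr[OF that] by (simp add: compression_operator_def)
  have node: "(\<integral>\<^sup>+w. ennreal ((norm (q i (\<xi> i w) (G i x w)))\<^sup>2) \<partial>M)
      \<le> ennreal (a i * (f i x - Inf (range (f i))) + (1 + \<omega> i) * C i)" if i: "i < n" for i x
  proof -
    have "indep_set {\<xi> i -` A \<inter> space M | A. A \<in> sets (S i)} {G i x -` B \<inter> space M | B. B \<in> sets borel}"
      using i \<xi>_meas G_meas by (intro indep_set_vimages_component[OF _ _ _ indep_QG[of x]]) auto
    from nn_integral_compressed_gradient_sq_le[where K="max (L i) 1",
        OF \<xi>_meas[OF i] G_meas[OF i] this q_meas[OF i] compr[OF i] bdd[OF i] _ _ smooth[OF i] _ G_second[OF i]]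
    show ?thesis
      using ABC_nonneg[OF i] by (simp add: a_def algebra_simps)
  qed
  obtain K D where K: "0 \<le> K" and D: "0 \<le> D" and gaps: "\<And>x.
      (1 / real n) * (\<Sum>i<n. a i * (f i x - Inf (range (f i))) + (1 + \<omega> i) * C i)
        \<le> K * (F x - Inf (range F)) + D"
    using mean_weighted_gaps_le_gap_of_mean[of "{..<n}" f a "\<lambda>i. (1 + \<omega> i) * C i"] bdd \<omega> ABC_nonneg
    unfolding F_def a_def by auto
  have "(\<integral>\<^sup>+w. ennreal ((norm ((1 / real n) *\<^sub>R (\<Sum>i<n. q i (\<xi> i w) (G i x w))))\<^sup>2) \<partial>M)
      \<le> ennreal ((1 / real n) * (\<Sum>i<n. a i * (f i x - Inf (range (f i))) + (1 + \<omega> i) * C i))" for x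
    using nn_integral_norm_mean_sq_le[where I="{..<n}" and X="\<lambda>i w. q i (\<xi> i w) (G i x w)"
        and b="\<lambda>i. a i * (f i x - Inf (range (f i))) + (1 + \<omega> i) * C i"]
      measurable_compose[OF measurable_Pair[OF \<xi>_meas G_meas] q_meas] node \<omega> ABC_nonneg bdd
    by (simp add: a_def cInf_lower)
  then show ?thesis
    using K D order_trans[OF _ ennreal_leI[OF gaps]]
    by (intro exI[of _ "K / 2"] exI[of _ "0::real"] exI[of _ D]) simp
qed

end
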